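(* Let $G$ be a simple graph and let $s\geq 1$ be an integer such that $G$ contains no cycle of odd length at most $2s-3$. Then $I(G)^{(s+1)}\subseteq I(G)^s$.
   Context: $S=\mathbb{K}[x_1,\dots,x_n]$ over a field $\mathbb{K}$; vertices of $G$ are the variables. $I(G)$ is the edge ideal and $I(G)^{(s)}=\bigcap_{C\in\mathcal{C}(G)}\mathfrak{p}_C^s$, where $\mathcal{C}(G)$ is the set of minimal vertex covers of $G$ and $\mathfrak{p}_C$ is generated by the variables in $C$. For $s\le 2$ the hypothesis on odd cycles is vacuous. *)

theory Defs
  imports Main "HOL-Library.Poly_Mapping"
begin

(* Polynomial ring K[x_v : v in 'v]: monomials are exponent vectors 'v =>0 nat. *)

type_synonym ('v, 'k) mpoly = "('v \<Rightarrow>\<^sub>0 nat) \<Rightarrow>\<^sub>0 'k"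

definition var :: "'v \<Rightarrow> ('v, 'k::comm_ring_1) mpoly" where
  "var v = Poly_Mapping.single (Poly_Mapping.single v 1) 1"

definition is_ideal :: "'a::comm_ring_1 set \<Rightarrow> bool" where
  "is_ideal I \<longleftrightarrow> 0 \<in> I \<and> (\<forall>a\<in>I. \<forall>b\<in>I. a + b \<in> I) \<and> (\<forall>r. \<forall>a\<in>I. r * a \<in> I)"

definition ideal_gen :: "'a::comm_ring_1 set \<Rightarrow> 'a set" where
  "ideal_gen S = \<Inter>{I. is_ideal I \<and> S \<subseteq> I}"

definition ideal_pow :: "'a::comm_ring_1 set \<Rightarrow> nat \<Rightarrow> 'a set" where
  "ideal_pow I s = ideal_gen {prod_list xs | xs. length xs = s \<and> set xs \<subseteq> I}"

(* Simple graph on vertex set UNIV :: 'v set, given by its edge set. *)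
definition simple_graph :: "'v set set \<Rightarrow> bool" where
  "simple_graph E \<longleftrightarrow> (\<forall>e\<in>E. card e = 2)"

definition edge_ideal :: "'v set set \<Rightarrow> ('v, 'k::comm_ring_1) mpoly set" where
  "edge_ideal E = ideal_gen {var u * var v | u v. {u, v} \<in> E}"

definition vertex_cover :: "'v set set \<Rightarrow> 'v set \<Rightarrow> bool" where
  "vertex_cover E C \<longleftrightarrow> (\<forall>e\<in>E. e \<inter> C \<noteq> {})"

definition minimal_vertex_cover :: "'v set set \<Rightarrow> 'v set \<Rightarrow> bool" where
  "minimal_vertex_cover E C \<longleftrightarrow> vertex_cover E C \<and> (\<forall>D. D \<subset> C \<longrightarrow> \<not> vertex_cover E D)"

definition var_ideal :: "'v set \<Rightarrow> ('v, 'k::comm_ring_1) mpoly set" where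
  "var_ideal C = ideal_gen (var ` C)"

definition symbolic_power :: "'v set set \<Rightarrow> nat \<Rightarrow> ('v, 'k::comm_ring_1) mpoly set" where
  "symbolic_power E s = \<Inter>{ideal_pow (var_ideal C) s | C. minimal_vertex_cover E C}"

definition has_cycle_of_length :: "'v set set \<Rightarrow> nat \<Rightarrow> bool" where
  "has_cycle_of_length E k \<longleftrightarrow> k \<ge> 3 \<and>
     (\<exists>vs. length vs = k \<and> distinct vs \<and> (\<forall>i<k. {vs ! i, vs ! ((i + 1) mod k)} \<in> E))"

end

theory Submission
  imports Defs
begin

text \<open>A polynomial lies in \<open>I(G)\<^sup>s\<close> once each of its monomials does, and every monomial
  \<open>x\<^sup>a\<close> of \<open>I(G)\<^bsup>(s+1)\<^esup>\<close> has degree at least \<open>s + 1\<close> on each minimal vertex cover. Blow up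
  \<open>G\<close> by replacing each vertex \<open>v\<close> by \<open>a\<^sub>v\<close> independent copies: a matching with \<open>s\<close> edges
  in the blown-up graph gives \<open>s\<close> edge monomials whose product divides \<open>x\<^sup>a\<close>, and every vertex
  cover of the blown-up graph has at least \<open>s + 1\<close> vertices, because the vertices all of whose
  copies it contains cover \<open>G\<close>. The blown-up graph still has no odd cycle of length at most
  \<open>2s - 3\<close>, so it suffices that a graph with matching number \<open>\<nu> < s\<close> and no such odd cycle has
  a vertex cover with at most \<open>s\<close> vertices. This goes by induction on \<open>s\<close>; in the critical case,
  where every vertex is missed by some maximum matching, Gallai's alternating-path argument
  produces an odd cycle of length at most \<open>2\<nu> + 1\<close>, hence exactly \<open>2\<nu> + 1\<close>; it is chordless,
  contains every edge, and its even-indexed vertices form a cover with \<open>\<nu> + 1 \<le> s\<close> vertices.\<close>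

section \<open>Ideals and monomials\<close>

lemma is_ideal_ideal_gen: "is_ideal (ideal_gen S)"
  unfolding ideal_gen_def is_ideal_def by auto

lemma generators_subset_ideal_gen: "S \<subseteq> ideal_gen S"
  unfolding ideal_gen_def by auto

lemma ideal_gen_minimal: "is_ideal I \<Longrightarrow> S \<subseteq> I \<Longrightarrow> ideal_gen S \<subseteq> I"
  unfolding ideal_gen_def by auto

lemma is_ideal_ideal_pow: "is_ideal (ideal_pow I s)"
  unfolding ideal_pow_def by (rule is_ideal_ideal_gen)

lemma prod_list_in_ideal_pow:
  assumes "length xs = s" "set xs \<subseteq> I"
  shows "prod_list xs \<in> ideal_pow I s"
  unfolding ideal_pow_def using assms by (blast intro: subsetD[OF generators_subset_ideal_gen])

lemma ideal_mult_left: "is_ideal I \<Longrightarrow> a \<in> I \<Longrightarrow> r * a \<in> I"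
  unfolding is_ideal_def by blast

lemma ideal_sum: "is_ideal I \<Longrightarrow> (\<And>x. x \<in> A \<Longrightarrow> f x \<in> I) \<Longrightarrow> sum f A \<in> I"
  by (induction A rule: infinite_finite_induct) (auto simp: is_ideal_def)

lemma sum_single_keys:
  "(\<Sum>m\<in>Poly_Mapping.keys p. Poly_Mapping.single m (Poly_Mapping.lookup p m)) = p"
  by (rule poly_mapping_eqI) (simp add: lookup_sum lookup_single when_def in_keys_iff)

lemma in_ideal_if_monomials_in:
  fixes p :: "('v, 'k::comm_ring_1) mpoly"
  assumes I: "is_ideal I" and mono: "\<And>m. m \<in> Poly_Mapping.keys p \<Longrightarrow> Poly_Mapping.single m 1 \<in> I"
  shows "p \<in> I"
proof -
  have "Poly_Mapping.single m (Poly_Mapping.lookup p m) \<in> I" if "m \<in> Poly_Mapping.keys p" for m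
    using ideal_mult_left[OF I mono[OF that], of "Poly_Mapping.single 0 (Poly_Mapping.lookup p m)"]
    by (simp add: mult_single)
  then have "(\<Sum>m\<in>Poly_Mapping.keys p. Poly_Mapping.single m (Poly_Mapping.lookup p m)) \<in> I"
    by (rule ideal_sum[OF I])
  then show ?thesis by (simp only: sum_single_keys)
qed

lemma monomial_in_ideal_if_divisible:
  fixes n m :: "'v \<Rightarrow>\<^sub>0 nat"
  assumes I: "is_ideal (I :: ('v, 'k::comm_ring_1) mpoly set)"
    and n: "Poly_Mapping.single n 1 \<in> I"
    and le: "\<And>v. Poly_Mapping.lookup n v \<le> Poly_Mapping.lookup m v"
  shows "Poly_Mapping.single m 1 \<in> I"
proof -
  have "m = (m - n) + n"
    by (rule poly_mapping_eqI) (simp add: lookup_add lookup_minus le)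
  then have "Poly_Mapping.single m (1::'k)
      = Poly_Mapping.single (m - n) 1 * Poly_Mapping.single n 1"
    by (simp add: mult_single)
  then show ?thesis using ideal_mult_left[OF I n] by simp
qed

lemma prod_single_one:
  "(\<Prod>x\<in>A. Poly_Mapping.single (f x) (1::'k::comm_ring_1)) = Poly_Mapping.single (sum f A) 1"
  by (induction A rule: infinite_finite_induct) (simp_all add: mult_single)

definition degree_on :: "'v set \<Rightarrow> ('v \<Rightarrow>\<^sub>0 nat) \<Rightarrow> nat" where
  "degree_on C m = (\<Sum>v\<in>C. Poly_Mapping.lookup m v)"

definition degree_on_at_least :: "'v set \<Rightarrow> nat \<Rightarrow> ('v, 'k::comm_ring_1) mpoly set" where
  "degree_on_at_least C d = {p. \<forall>m\<in>Poly_Mapping.keys p. d \<le> degree_on C m}"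

lemma degree_on_add: "degree_on C (m + n) = degree_on C m + degree_on C n"
  by (simp add: degree_on_def lookup_add sum.distrib)

lemma degree_on_at_least_mult:
  "p \<in> degree_on_at_least C a \<Longrightarrow> q \<in> degree_on_at_least C b \<Longrightarrow> p * q \<in> degree_on_at_least C (a + b)"
  unfolding degree_on_at_least_def using keys_mult[of p q] by (force simp: degree_on_add)

lemma is_ideal_degree_on_at_least:
  "is_ideal (degree_on_at_least C d :: ('v, 'k::comm_ring_1) mpoly set)"
  unfolding is_ideal_def
proof (intro conjI ballI allI)
  fix a b r :: "('v, 'k) mpoly"
  assume a: "a \<in> degree_on_at_least C d" and "b \<in> degree_on_at_least C d"
  then show "a + b \<in> degree_on_at_least C d"
    unfolding degree_on_at_least_def using keys_add[of a b] by blast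
  have "r \<in> degree_on_at_least C 0" by (simp add: degree_on_at_least_def)
  from degree_on_at_least_mult[OF this a] show "r * a \<in> degree_on_at_least C d" by simp
qed (simp add: degree_on_at_least_def)

lemma var_ideal_subset_degree_on_at_least:
  assumes "finite C"
  shows "var_ideal C \<subseteq> degree_on_at_least C 1"
  unfolding var_ideal_def
proof (rule ideal_gen_minimal[OF is_ideal_degree_on_at_least], safe)
  fix c assume "c \<in> C"
  then have "degree_on C (Poly_Mapping.single c 1) = 1"
    using assms by (simp add: degree_on_def lookup_single when_def)
  then show "var c \<in> degree_on_at_least C 1" by (simp add: degree_on_at_least_def var_def)
qed

lemma prod_list_in_degree_on_at_least:
  "set xs \<subseteq> degree_on_at_least C 1 \<Longrightarrow> prod_list xs \<in> degree_on_at_least C (length xs)"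
proof (induction xs)
  case Nil then show ?case by (simp add: degree_on_at_least_def)
next
  case (Cons x xs)
  then show ?case using degree_on_at_least_mult[of x C 1 "prod_list xs"] by simp
qed

lemma ideal_pow_var_ideal_subset:
  assumes "finite C"
  shows "ideal_pow (var_ideal C) d \<subseteq> degree_on_at_least C d"
  unfolding ideal_pow_def
  using var_ideal_subset_degree_on_at_least[OF assms] prod_list_in_degree_on_at_least
  by (intro ideal_gen_minimal[OF is_ideal_degree_on_at_least]) fastforce

lemma degree_on_cover_if_in_symbolic_power:
  fixes E :: "('v::finite) set set"
  assumes "p \<in> symbolic_power E d" "m \<in> Poly_Mapping.keys p" "minimal_vertex_cover E C"
  shows "d \<le> degree_on C m"
proof -
  have "p \<in> ideal_pow (var_ideal C) d" using assms(1,3) unfolding symbolic_power_def by blast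
  then show ?thesis
    using ideal_pow_var_ideal_subset[of C d] assms(2) unfolding degree_on_at_least_def by auto
qed

section \<open>Matchings\<close>

definition matching :: "'a set set \<Rightarrow> bool" where
  "matching M \<longleftrightarrow> (\<forall>e\<in>M. \<forall>f\<in>M. e \<noteq> f \<longrightarrow> e \<inter> f = {})"

definition matching_number :: "'a set set \<Rightarrow> nat" where
  "matching_number F = Max (card ` {M. M \<subseteq> F \<and> matching M})"

definition maximum_matching :: "'a set set \<Rightarrow> 'a set set \<Rightarrow> bool" where
  "maximum_matching F M \<longleftrightarrow> M \<subseteq> F \<and> matching M \<and> card M = matching_number F"

definition finite_graph :: "'a set set \<Rightarrow> bool" where
  "finite_graph F \<longleftrightarrow> finite F \<and> (\<forall>e\<in>F. card e = 2)"

lemma matching_insert: "matching M \<Longrightarrow> (\<And>f. f \<in> M \<Longrightarrow> e \<inter> f = {}) \<Longrightarrow> matching (insert e M)"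
  unfolding matching_def by blast

lemma matching_subset: "matching M \<Longrightarrow> N \<subseteq> M \<Longrightarrow> matching N"
  unfolding matching_def by blast

lemma card_le_matching_number:
  "finite F \<Longrightarrow> M \<subseteq> F \<Longrightarrow> matching M \<Longrightarrow> card M \<le> matching_number F"
  unfolding matching_number_def by (rule Max_ge) auto

lemma maximum_matching_exists:
  assumes "finite F"
  obtains M where "maximum_matching F M"
proof -
  have "{} \<in> {M. M \<subseteq> F \<and> matching M}" by (auto simp: matching_def)
  then have "matching_number F \<in> card ` {M. M \<subseteq> F \<and> matching M}"
    unfolding matching_number_def using assms by (intro Max_in) auto
  then show ?thesis using that by (auto simp: maximum_matching_def)
qed

lemma card_less_matching_number_if_disjoint_edge:
  assumes "finite F" "M \<subseteq> F" "matching M" "e \<in> F" "e \<noteq> {}" "\<And>f. f \<in> M \<Longrightarrow> e \<inter> f = {}"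
  shows "card M < matching_number F"
proof -
  have "e \<notin> M" using assms(5,6) by blast
  moreover have "finite M" using assms(1,2) finite_subset by blast
  moreover have "card (insert e M) \<le> matching_number F"
    using assms by (intro card_le_matching_number matching_insert) auto
  ultimately show ?thesis by simp
qed

lemma maximum_matching_meets_edge:
  assumes "finite_graph F" "maximum_matching F M" "e \<in> F"
  shows "\<exists>f\<in>M. e \<inter> f \<noteq> {}"
proof (rule ccontr)
  assume "\<not> ?thesis"
  moreover have "e \<noteq> {}" using assms(1,3) by (auto simp: finite_graph_def)
  ultimately have "card M < matching_number F"
    using assms by (intro card_less_matching_number_if_disjoint_edge)
      (auto simp: finite_graph_def maximum_matching_def)
  then show False using assms(2) by (simp add: maximum_matching_def)
qed

lemma obtain_other_endpoint:
  assumes "card e = 2" "a \<in> e"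
  obtains w where "w \<noteq> a" "e = {a, w}"
  using assms by (metis card_2_iff insert_commute insert_iff singletonD)

lemma matching_number_remove_edge:
  assumes F: "finite_graph F" and M: "maximum_matching F M" and e: "e \<in> M"
  shows "matching_number {g\<in>F. g \<inter> e = {}} = matching_number F - 1"
proof -
  let ?F' = "{g\<in>F. g \<inter> e = {}}"
  have finF: "finite F" using F by (simp add: finite_graph_def)
  have eF: "e \<in> F" using M e by (auto simp: maximum_matching_def)
  then have "e \<noteq> {}" using F by (auto simp: finite_graph_def)
  have "M - {e} \<subseteq> ?F'" using M e unfolding maximum_matching_def matching_def by blast
  moreover have "matching (M - {e})" using M by (auto simp: maximum_matching_def matching_def)
  ultimately have "card (M - {e}) \<le> matching_number ?F'"
    using finF by (intro card_le_matching_number) auto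
  moreover have "card (M - {e}) = matching_number F - 1"
    using M e finF finite_subset by (auto simp: maximum_matching_def)
  moreover obtain N where N: "maximum_matching ?F' N"
    using maximum_matching_exists[of ?F'] finF by auto
  then have "card N < matching_number F"
    using finF eF \<open>e \<noteq> {}\<close> by (intro card_less_matching_number_if_disjoint_edge)
      (auto simp: maximum_matching_def)
  ultimately show ?thesis using N by (auto simp: maximum_matching_def)
qed

lemma maximum_matching_Diff:
  assumes "finite F" "maximum_matching F M" "f \<in> M" "M - {f} \<subseteq> F'"
    and "matching_number F' = matching_number F - 1"
  shows "maximum_matching F' (M - {f})"
proof -
  have "finite M" using assms(1,2) finite_subset by (auto simp: maximum_matching_def)
  then show ?thesis
    using assms(2-5) by (auto simp: maximum_matching_def intro: matching_subset)
qed

lemma maximum_matching_insert: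
  assumes "finite F" "F' \<subseteq> F" "matching_number F' = matching_number F - 1" "matching_number F \<ge> 1"
    and N: "maximum_matching F' N"
    and f: "f \<in> F" "f \<noteq> {}" "\<And>g. g \<in> N \<Longrightarrow> f \<inter> g = {}"
  shows "maximum_matching F (insert f N)"
proof -
  have "f \<notin> N" using f(2,3) by blast
  moreover have "N \<subseteq> F" using N assms(2) by (auto simp: maximum_matching_def)
  then have "finite N" using assms(1) by (rule finite_subset)
  ultimately have "card (insert f N) = matching_number F"
    using N assms(3,4) by (simp add: maximum_matching_def)
  moreover have "matching (insert f N)"
    using N f(3) by (auto simp: maximum_matching_def intro: matching_insert)
  ultimately show ?thesis using N assms(2) f(1) by (auto simp: maximum_matching_def)
qed

text \<open>Gallai's alternating-path argument: follow the edge of \<open>M2\<close> at \<open>a\<close> to \<open>w\<close>, then the edge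
  of \<open>M1\<close> at \<open>w\<close> to \<open>z\<close>, and recurse in the graph without the vertices \<open>a, w\<close>, where \<open>z\<close> and
  \<open>b\<close> play the roles of \<open>a\<close> and \<open>b\<close> and the matching number has dropped by one.\<close>

lemma even_path_between_avoided_vertices:
  assumes "finite_graph F"
    and "maximum_matching F M1" "a \<notin> \<Union>M1"
    and "maximum_matching F M2" "b \<notin> \<Union>M2"
    and "\<And>N. maximum_matching F N \<Longrightarrow> a \<in> \<Union>N \<or> b \<in> \<Union>N"
  shows "\<exists>P. distinct P \<and> P \<noteq> [] \<and> hd P = a \<and> last P = b \<and> odd (length P)
    \<and> length P \<le> 2 * matching_number F + 1 \<and> set P \<subseteq> \<Union>F \<and> successively (\<lambda>x y. {x, y} \<in> F) P"
  using assms
proof (induction "matching_number F" arbitrary: F M1 M2 a b rule: less_induct)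
  case less
  note F = less.prems(1) and M1 = less.prems(2,3) and M2 = less.prems(4,5)
  have finF: "finite F" and card2: "\<And>e. e \<in> F \<Longrightarrow> card e = 2"
    using F by (auto simp: finite_graph_def)
  have "a \<in> \<Union>M2" using less.prems(6)[OF M2(1)] M2(2) by blast
  then obtain e where e: "e \<in> M2" "a \<in> e" by blast
  have eF: "e \<in> F" using e M2 by (auto simp: maximum_matching_def)
  obtain w where w: "w \<noteq> a" "e = {a, w}" using card2[OF eF] e(2) by (rule obtain_other_endpoint)
  obtain f where f: "f \<in> M1" "w \<in> f"
    using maximum_matching_meets_edge[OF F M1(1) eF] M1(2) w by blast
  have fF: "f \<in> F" using f M1 by (auto simp: maximum_matching_def)
  obtain z where z: "z \<noteq> w" "f = {w, z}" using card2[OF fF] f(2) by (rule obtain_other_endpoint)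
  have "a \<notin> f" using M1(2) f(1) by blast
  then have za: "z \<noteq> a" using z(2) by blast
  have "b \<notin> e" using M2(2) e(1) by blast
  then have bw: "b \<noteq> w" using w(2) by blast
  have "finite M2" using M2(1) finF finite_subset by (auto simp: maximum_matching_def)
  then have "card M2 > 0" using e(1) by (auto simp: card_gt_0_iff)
  then have nu_pos: "matching_number F \<ge> 1" using M2(1) by (simp add: maximum_matching_def)
  show ?case
  proof (cases "z = b")
    case True
    then show ?thesis using w z za bw nu_pos eF fF
      by (intro exI[of _ "[a, w, b]"]) auto
  next
    case zb: False
    define F' where "F' = {g\<in>F. g \<inter> e = {}}"
    have F': "finite_graph F'" using F by (auto simp: finite_graph_def F'_def)
    have nu_F': "matching_number F' = matching_number F - 1"
      unfolding F'_def by (rule matching_number_remove_edge[OF F M2(1) e(1)])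
    have "M1 - {f} \<subseteq> F'"
      using M1 f w unfolding F'_def maximum_matching_def matching_def by blast
    then have M1': "maximum_matching F' (M1 - {f})"
      by (rule maximum_matching_Diff[OF finF M1(1) f(1) _ nu_F'])
    have "M2 - {e} \<subseteq> F'"
      using M2 e unfolding F'_def maximum_matching_def matching_def by blast
    then have M2': "maximum_matching F' (M2 - {e})"
      by (rule maximum_matching_Diff[OF finF M2(1) e(1) _ nu_F'])
    have z_avoided: "z \<notin> \<Union>(M1 - {f})"
    proof
      assume "z \<in> \<Union>(M1 - {f})"
      then obtain g where g: "g \<in> M1" "g \<noteq> f" "z \<in> g" by blast
      have "matching M1" using M1(1) by (simp add: maximum_matching_def)
      then have "g \<inter> f = {}" using g(1,2) f(1) unfolding matching_def by blast
      then show False using g(3) z(2) by blast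
    qed
    have b_avoided: "b \<notin> \<Union>(M2 - {e})" using M2(2) by blast
    have zb_matched: "z \<in> \<Union>N \<or> b \<in> \<Union>N" if N: "maximum_matching F' N" for N
    proof (rule ccontr)
      assume zb_N: "\<not> (z \<in> \<Union>N \<or> b \<in> \<Union>N)"
      have f_disj: "f \<inter> g = {}" if "g \<in> N" for g
      proof -
        have "g \<inter> e = {}" using N that by (auto simp: F'_def maximum_matching_def)
        then have "w \<notin> g" using w(2) by auto
        moreover have "z \<notin> g" using zb_N that by blast
        ultimately show ?thesis using z(2) by auto
      qed
      have "F' \<subseteq> F" "f \<noteq> {}" using f(2) by (auto simp: F'_def)
      with finF have "maximum_matching F (insert f N)"
        using nu_F' nu_pos N fF f_disj by (intro maximum_matching_insert)
      then have "a \<in> \<Union>(insert f N) \<or> b \<in> \<Union>(insert f N)" by (rule less.prems(6))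
      moreover have "a \<notin> \<Union>N" using N e(2) unfolding F'_def maximum_matching_def by blast
      moreover have "b \<notin> f" using z(2) zb bw by auto
      ultimately show False using \<open>a \<notin> f\<close> zb_N by blast
    qed
    have "matching_number F' < matching_number F" using nu_F' nu_pos by simp
    from less.hyps[OF this F' M1' z_avoided M2' b_avoided zb_matched]
    obtain P where P: "distinct P" "P \<noteq> []" "hd P = z" "last P = b" "odd (length P)"
      "length P \<le> 2 * matching_number F' + 1" "set P \<subseteq> \<Union>F'"
      "successively (\<lambda>x y. {x, y} \<in> F') P"
      by blast
    have aw_notin: "a \<notin> set P" "w \<notin> set P" using P(7) w by (auto simp: F'_def)
    have "successively (\<lambda>x y. {x, y} \<in> F) P"
      using P(8) by (rule successively_mono) (auto simp: F'_def)
    then have "successively (\<lambda>x y. {x, y} \<in> F) (a # w # P)"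
      using P(2,3) eF fF w z by (cases P) (auto simp: insert_commute)
    moreover have "set (a # w # P) \<subseteq> \<Union>F" using P(7) eF w by (auto simp: F'_def)
    ultimately show ?thesis
      using P(1-6) aw_notin w nu_F' nu_pos by (intro exI[of _ "a # w # P"]) auto
  qed
qed

section \<open>Closed walks and odd cycles\<close>

definition closed_walk :: "'a set set \<Rightarrow> 'a list \<Rightarrow> bool" where
  "closed_walk F ws \<longleftrightarrow> ws \<noteq> [] \<and> (\<forall>i<length ws. {ws ! i, ws ! (Suc i mod length ws)} \<in> F)"

lemma closed_walk_mono: "closed_walk F ws \<Longrightarrow> F \<subseteq> F' \<Longrightarrow> closed_walk F' ws"
  unfolding closed_walk_def by blast

lemma closed_walk_rotate:
  assumes "closed_walk F ws"
  shows "closed_walk F (rotate r ws)"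
proof -
  let ?n = "length ws"
  have n: "?n > 0" using assms by (auto simp: closed_walk_def)
  have "{rotate r ws ! i, rotate r ws ! (Suc i mod ?n)} \<in> F" if i: "i < ?n" for i
  proof -
    have "Suc ((r + i) mod ?n) mod ?n = (r + Suc i mod ?n) mod ?n"
      by (simp add: mod_Suc_eq mod_add_right_eq)
    moreover have "{ws ! ((r + i) mod ?n), ws ! (Suc ((r + i) mod ?n) mod ?n)} \<in> F"
      using assms n by (auto simp: closed_walk_def)
    ultimately show ?thesis using i n by (simp add: nth_rotate)
  qed
  then show ?thesis using assms by (auto simp: closed_walk_def)
qed

lemma closed_walk_take_rotate:
  assumes "closed_walk F vs" "r < length vs" "1 \<le> m" "m \<le> length vs"
    and chord: "{vs ! ((r + m - 1) mod length vs), vs ! r} \<in> F"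
  shows "closed_walk F (take m (rotate r vs))"
proof -
  let ?n = "length vs" and ?rs = "rotate r vs"
  have rs: "closed_walk F ?rs" using closed_walk_rotate[OF assms(1)] .
  have "{take m ?rs ! i, take m ?rs ! (Suc i mod m)} \<in> F" if i: "i < m" for i
  proof (cases "Suc i < m")
    case True
    then have "Suc i mod ?n = Suc i" using assms(4) by simp
    moreover have "{?rs ! i, ?rs ! (Suc i mod ?n)} \<in> F"
      using rs i assms(4) unfolding closed_walk_def by auto
    ultimately show ?thesis using True assms(4) by simp
  next
    case False
    then have im: "i = m - 1" "Suc i = m" using i by auto
    have "?rs ! i = vs ! ((r + m - 1) mod ?n)" using im i assms(3,4) by (simp add: nth_rotate)
    moreover have "?rs ! 0 = vs ! r" using nth_rotate[of 0 vs r] assms(2) by (cases vs) auto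
    ultimately show ?thesis using im chord i assms(3) by simp
  qed
  then show ?thesis using assms(3,4) by (auto simp: closed_walk_def)
qed

lemma closed_walk_of_path:
  assumes "successively (\<lambda>x y. {x, y} \<in> F) P" "P \<noteq> []" "{last P, hd P} \<in> F"
  shows "closed_walk F P"
  unfolding closed_walk_def
proof (intro conjI allI impI)
  fix i assume i: "i < length P"
  show "{P ! i, P ! (Suc i mod length P)} \<in> F"
  proof (cases "Suc i < length P")
    case True then show ?thesis using successively_nth[OF assms(1)] by simp
  next
    case False
    then have "i = length P - 1" "Suc i = length P" using i by auto
    then show ?thesis using assms(2,3) by (simp add: last_conv_nth hd_conv_nth)
  qed
qed (use assms in simp)

lemma closed_walk_split:
  assumes walk: "closed_walk E ws" and ij: "i < j" "j < length ws" "ws ! i = ws ! j"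
  shows "closed_walk E (take (j - i) (rotate i ws))"
    and "closed_walk E (take (length ws - (j - i)) (rotate j ws))"
proof -
  let ?n = "length ws" and ?d = "j - i"
  show "closed_walk E (take ?d (rotate i ws))"
  proof (rule closed_walk_take_rotate[OF walk])
    show "i < ?n" "1 \<le> ?d" "?d \<le> ?n" using ij by auto
    have "(i + ?d - 1) mod ?n = j - 1" "Suc (j - 1) mod ?n = j" "j - 1 < ?n" using ij by auto
    then show "{ws ! ((i + ?d - 1) mod ?n), ws ! i} \<in> E"
      using walk ij(3) unfolding closed_walk_def by metis
  qed
  show "closed_walk E (take (?n - ?d) (rotate j ws))"
  proof (rule closed_walk_take_rotate[OF walk])
    show "j < ?n" "1 \<le> ?n - ?d" "?n - ?d \<le> ?n" using ij by auto
    have "j + (?n - ?d) - 1 = i + ?n - 1" using ij by simp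
    then have "(j + (?n - ?d) - 1) mod ?n = (i + ?n - 1) mod ?n" by simp
    moreover have "Suc (i + ?n - 1) = i + ?n" using ij by simp
    then have "Suc (i + ?n - 1) mod ?n = i" using ij by simp
    then have "Suc ((i + ?n - 1) mod ?n) mod ?n = i" by (simp add: mod_Suc_eq)
    moreover have "(i + ?n - 1) mod ?n < ?n" using ij by (intro mod_less_divisor) linarith
    ultimately show "{ws ! ((j + (?n - ?d) - 1) mod ?n), ws ! j} \<in> E"
      using walk ij(3) unfolding closed_walk_def by metis
  qed
qed

lemma has_cycle_of_length_if_distinct_odd_closed_walk:
  assumes "simple_graph E" "closed_walk E ws" "distinct ws" "odd (length ws)"
  shows "has_cycle_of_length E (length ws)"
proof -
  have "length ws \<noteq> 1"
  proof
    assume "length ws = 1"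
    then have "{ws ! 0, ws ! 0} \<in> E" using assms(2) by (auto simp: closed_walk_def)
    then show False using assms(1) by (fastforce simp: simple_graph_def)
  qed
  then have "length ws \<ge> 3" using assms(2,4) by (auto simp: closed_walk_def elim!: oddE)
  then show ?thesis
    unfolding has_cycle_of_length_def using assms(2,3) by (auto simp: closed_walk_def)
qed

lemma odd_closed_walk_contains_odd_cycle:
  assumes "simple_graph E" "closed_walk E ws" "odd (length ws)"
  shows "\<exists>k \<le> length ws. odd k \<and> has_cycle_of_length E k"
  using assms(2,3)
proof (induction "length ws" arbitrary: ws rule: less_induct)
  case less
  let ?n = "length ws"
  show ?case
  proof (cases "distinct ws")
    case True
    then show ?thesis
      using has_cycle_of_length_if_distinct_odd_closed_walk[OF assms(1) less.prems(1)] less.prems(2)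
      by blast
  next
    case False
    then obtain i j where ij: "i < j" "j < ?n" "ws ! i = ws ! j"
      by (metis distinct_conv_nth linorder_neqE_nat)
    define d where "d = j - i"
    have walk1: "closed_walk E (take d (rotate i ws))"
      and walk2: "closed_walk E (take (?n - d) (rotate j ws))"
      using closed_walk_split[OF less.prems(1) ij] by (simp_all add: d_def)
    have d: "d < ?n" "?n - d < ?n" and len1: "length (take d (rotate i ws)) = d"
      and len2: "length (take (?n - d) (rotate j ws)) = ?n - d"
      using ij by (auto simp: d_def)
    show ?thesis
    proof (cases "odd d")
      case True
      then obtain k where "k \<le> d" "odd k" "has_cycle_of_length E k"
        using less.hyps[OF _ walk1] d len1 by auto
      then show ?thesis using d(1) by (intro exI[of _ k]) auto
    next
      case False
      then have "odd (?n - d)" using less.prems(2) d by simp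
      then obtain k where "k \<le> ?n - d" "odd k" "has_cycle_of_length E k"
        using less.hyps[OF _ walk2] d len2 by auto
      then show ?thesis by (intro exI[of _ k]) auto
    qed
  qed
qed

section \<open>Vertex covers of graphs without short odd cycles\<close>

lemma matching_in_odd_cycle_avoiding:
  assumes "closed_walk F vs" "distinct vs" "length vs = 2 * s + 1" "j < length vs"
  shows "\<exists>M \<subseteq> F. matching M \<and> card M = s \<and> vs ! j \<notin> \<Union>M \<and> \<Union>M \<subseteq> set vs"
proof -
  define rs where "rs = rotate j vs"
  have rs: "closed_walk F rs" "distinct rs" "length rs = 2 * s + 1" "set rs = set vs"
    using closed_walk_rotate[OF assms(1)] assms(2,3) by (auto simp: rs_def)
  have rs0: "rs ! 0 = vs ! j" using nth_rotate[of 0 vs j] assms(4) by (cases vs) (auto simp: rs_def)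
  define g where "g i = {rs ! (2 * i + 1), rs ! (2 * i + 2)}" for i
  let ?M = "g ` {..<s}"
  have "?M \<subseteq> F"
  proof
    fix e assume "e \<in> ?M"
    then obtain i where i: "i < s" "e = g i" by auto
    have "Suc (2 * i + 1) mod length rs = 2 * i + 2" "2 * i + 1 < length rs" using i rs(3) by auto
    then show "e \<in> F" using rs(1) i unfolding closed_walk_def g_def by (metis add_2_eq_Suc')
  qed
  moreover have disj: "g i \<inter> g k = {}" if "i < s" "k < s" "i \<noteq> k" for i k
    using that rs(2,3) unfolding g_def by (auto simp: nth_eq_iff_index_eq)
  then have "matching ?M" unfolding matching_def by blast
  moreover have "inj_on g {..<s}"
  proof
    fix i k assume "i \<in> {..<s}" "k \<in> {..<s}" "g i = g k"
    then show "i = k" using disj[of i k] by (auto simp: g_def)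
  qed
  then have "card ?M = s" by (simp add: card_image)
  moreover have "rs ! 0 \<notin> \<Union>?M" using rs(2,3) unfolding g_def by (auto simp: nth_eq_iff_index_eq)
  moreover have "\<Union>?M \<subseteq> set vs" using rs(3,4) unfolding g_def by (auto simp flip: rs(4))
  ultimately show ?thesis using rs0 by metis
qed

text \<open>A chord of a shortest odd closed walk would split it into two shorter closed walks, one of
  them odd.\<close>

lemma shortest_odd_closed_walk_chordless:
  assumes "closed_walk F vs" "distinct vs" "n = length vs" "odd n"
    and shortest: "\<forall>ws. closed_walk F ws \<and> odd (length ws) \<longrightarrow> n \<le> length ws"
    and "i < j" "j < n" "{vs ! i, vs ! j} \<in> F"
  shows "j = i + 1 \<or> (i = 0 \<and> j = n - 1)"
proof (rule ccontr)
  assume no_chord: "\<not> ?thesis"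
  have len: "length (take m (rotate r vs)) = m" if "m \<le> n" for m r using that assms(3) by simp
  show False
  proof (cases "even (j - i)")
    case True
    define m where "m = j - i + 1"
    have "j - i \<noteq> 1" using True by (metis odd_one)
    then have m: "odd m" "m < n" using True no_chord assms(6,7) unfolding m_def by auto
    have "{vs ! ((i + m - 1) mod length vs), vs ! i} \<in> F"
      using assms(3,6,7,8) by (simp add: m_def insert_commute)
    then have "closed_walk F (take m (rotate i vs))"
      using assms(1,3,6,7) m by (intro closed_walk_take_rotate) (auto simp: m_def)
    then show False using shortest len[of m i] m by fastforce
  next
    case False
    define m where "m = n - (j - i) + 1"
    have "j - i \<ge> 3"
    proof -
      obtain k where "j - i = 2 * k + 1" using False oddE by blast
      moreover have "j - i \<noteq> 1" using no_chord assms(6) by auto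
      ultimately show ?thesis by (cases k) auto
    qed
    then have m: "odd m" "m < n" using False assms(4,6,7) by (auto simp: m_def)
    have "j + m - 1 = n + i" using assms(6,7) by (simp add: m_def)
    then have "{vs ! ((j + m - 1) mod length vs), vs ! j} \<in> F" using assms(3,6,7,8) by simp
    then have "closed_walk F (take m (rotate j vs))"
      using assms(1,3,6,7) m by (intro closed_walk_take_rotate) (auto simp: m_def)
    then show False using shortest len[of m j] m by fastforce
  qed
qed

text \<open>An edge leaving the cycle would extend a matching of size \<open>s\<close> inside the cycle that avoids
  the cycle vertex of the edge.\<close>

lemma edge_within_odd_cycle_of_matching_number:
  assumes F: "finite_graph F" and nu: "matching_number F = s"
    and vs: "closed_walk F vs" "distinct vs" "length vs = 2 * s + 1"
    and e: "e \<in> F"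
  shows "e \<subseteq> set vs"
proof (rule ccontr)
  assume "\<not> e \<subseteq> set vs"
  then obtain x where x: "x \<in> e" "x \<notin> set vs" by blast
  have finF: "finite F" and card_e: "card e = 2" using F e by (auto simp: finite_graph_def)
  obtain y where y: "y \<noteq> x" "e = {x, y}" using card_e x(1) by (rule obtain_other_endpoint)
  obtain j where j: "j < length vs" "y \<in> set vs \<longrightarrow> vs ! j = y"
    using vs(3) by (cases "y \<in> set vs") (auto simp: in_set_conv_nth)
  obtain M where M: "M \<subseteq> F" "matching M" "card M = s" "vs ! j \<notin> \<Union>M" "\<Union>M \<subseteq> set vs"
    using matching_in_odd_cycle_avoiding[OF vs j(1)] by blast
  have "e \<inter> f = {}" if "f \<in> M" for f
    using that M(4,5) j(2) x(2) y(2) by auto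
  then have "card M < matching_number F"
    using finF M(1,2) e x(1) by (intro card_less_matching_number_if_disjoint_edge) auto
  then show False using M(3) nu by simp
qed

lemma vertex_cover_of_shortest_odd_cycle:
  assumes F: "finite_graph F" and nu: "matching_number F = s"
    and vs: "closed_walk F vs" "distinct vs" "length vs = 2 * s + 1"
    and shortest: "\<forall>ws. closed_walk F ws \<and> odd (length ws) \<longrightarrow> 2 * s + 1 \<le> length ws"
  shows "\<exists>D. finite D \<and> vertex_cover F D \<and> card D \<le> s + 1"
proof -
  define D where "D = (\<lambda>i. vs ! (2 * i)) ` {..s}"
  have even_in_D: "vs ! k \<in> D" if "k < length vs" "even k" for k
    unfolding D_def using that vs(3) by (intro image_eqI[of _ _ "k div 2"]) auto
  have even_vertex: "e \<inter> D \<noteq> {}" if "a < b" "b < length vs" "{vs ! a, vs ! b} = e" "e \<in> F" for a b e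
  proof -
    have "b = a + 1 \<or> (a = 0 \<and> b = length vs - 1)"
      using shortest_odd_closed_walk_chordless[OF vs(1,2) refl] vs(3) shortest that by auto
    moreover have "vs ! 0 \<in> D" using even_in_D[of 0] vs(3) by simp
    ultimately show ?thesis using that even_in_D by (cases "even a") auto
  qed
  have "vertex_cover F D" unfolding vertex_cover_def
  proof
    fix e assume e: "e \<in> F"
    obtain x y where xy: "x \<noteq> y" "e = {x, y}"
      using F e card_2_iff[of e] by (auto simp: finite_graph_def)
    then have "x \<in> set vs" "y \<in> set vs"
      using edge_within_odd_cycle_of_matching_number[OF F nu vs e] by auto
    then obtain i j where i: "i < length vs" "vs ! i = x" and j: "j < length vs" "vs ! j = y"
      by (auto simp: in_set_conv_nth)
    have "i \<noteq> j" using i j xy by auto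
    then show "e \<inter> D \<noteq> {}"
      using even_vertex[of i j e] even_vertex[of j i e] i j xy e
      by (cases "i < j") (auto simp: insert_commute)
  qed
  moreover have "finite D" "card D \<le> s + 1" unfolding D_def using card_image_le[of "{..s}"] by auto
  ultimately show ?thesis by blast
qed

lemma short_odd_cycle_if_every_vertex_avoidable:
  assumes F: "finite_graph F" and e: "e \<in> F"
    and avoidable: "\<And>v. \<exists>M. maximum_matching F M \<and> v \<notin> \<Union>M"
  shows "\<exists>P. closed_walk F P \<and> distinct P \<and> odd (length P) \<and> length P \<le> 2 * matching_number F + 1"
proof -
  have finF: "finite F" and "card e = 2" using F e by (auto simp: finite_graph_def)
  then obtain u v where uv: "u \<noteq> v" "e = {u, v}" by (meson card_2_iff)
  obtain M1 M2 where M1: "maximum_matching F M1" "u \<notin> \<Union>M1"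
    and M2: "maximum_matching F M2" "v \<notin> \<Union>M2"
    using avoidable by meson
  have "u \<in> \<Union>N \<or> v \<in> \<Union>N" if N: "maximum_matching F N" for N
  proof (rule ccontr)
    assume "\<not> ?thesis"
    then have "e \<inter> f = {}" if "f \<in> N" for f using that uv(2) by auto
    then have "card N < matching_number F"
      using finF N e uv by (intro card_less_matching_number_if_disjoint_edge)
        (auto simp: maximum_matching_def)
    then show False using N by (simp add: maximum_matching_def)
  qed
  then obtain P where P: "distinct P" "P \<noteq> []" "hd P = u" "last P = v" "odd (length P)"
    "length P \<le> 2 * matching_number F + 1" "successively (\<lambda>x y. {x, y} \<in> F) P"
    using even_path_between_avoided_vertices[OF F M1 M2] by blast
  have "closed_walk F P"
    using P(2,3,4,7) e uv(2) by (intro closed_walk_of_path) (auto simp: insert_commute)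
  then show ?thesis using P by blast
qed

text \<open>If the matching number is smaller than \<open>s - 1\<close>, or deleting some vertex
  lowers it, the induction hypothesis applies. Otherwise every vertex is avoided by a maximum
  matching, and the resulting short odd cycle is, by the girth bound, a shortest one of length
  \<open>2 \<nu> + 1\<close>.\<close>

lemma small_vertex_cover_if_small_matching_number:
  assumes "finite_graph F" "matching_number F < s"
    and "\<forall>ws. closed_walk F ws \<and> odd (length ws) \<longrightarrow> 2 * s \<le> length ws + 1"
  shows "\<exists>D. finite D \<and> vertex_cover F D \<and> card D \<le> s"
  using assms
proof (induction s arbitrary: F)
  case 0
  then show ?case by simp
next
  case (Suc s)
  note F = Suc.prems(1) and girth = Suc.prems(3)
  have finF: "finite F" using F by (simp add: finite_graph_def)
  have girth': "\<forall>ws. closed_walk F' ws \<and> odd (length ws) \<longrightarrow> 2 * s \<le> length ws + 1"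
    if "F' \<subseteq> F" for F'
    using girth closed_walk_mono[OF _ that] by fastforce
  consider "matching_number F < s" | "matching_number F = s" using Suc.prems(2) by linarith
  then show ?case
  proof cases
    case 1
    then show ?thesis using Suc.IH[OF F 1 girth'] by fastforce
  next
    case nu: 2
    show ?thesis
    proof (cases "\<exists>v. matching_number {e\<in>F. v \<notin> e} < s")
      case True
      then obtain v where v: "matching_number {e\<in>F. v \<notin> e} < s" by blast
      have "finite_graph {e\<in>F. v \<notin> e}" using F by (auto simp: finite_graph_def)
      then obtain D where D: "finite D" "vertex_cover {e\<in>F. v \<notin> e} D" "card D \<le> s"
        using Suc.IH[OF _ v girth'] by blast
      have "vertex_cover F (insert v D)" using D(2) by (auto simp: vertex_cover_def)
      moreover have "card (insert v D) \<le> Suc s" using D(1,3) by (simp add: card_insert_if)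
      ultimately show ?thesis using D(1) by blast
    next
      case False
      have avoidable: "\<exists>M. maximum_matching F M \<and> v \<notin> \<Union>M" for v
      proof -
        obtain N where N: "maximum_matching {e\<in>F. v \<notin> e} N"
          using maximum_matching_exists[of "{e\<in>F. v \<notin> e}"] finF by auto
        then have "card N \<le> matching_number F"
          using finF by (intro card_le_matching_number) (auto simp: maximum_matching_def)
        moreover have "\<not> matching_number {e\<in>F. v \<notin> e} < s" using False by blast
        ultimately have "maximum_matching F N" using N nu by (auto simp: maximum_matching_def)
        then show ?thesis using N by (auto simp: maximum_matching_def)
      qed
      show ?thesis
      proof (cases "F = {}")
        case True
        then show ?thesis by (intro exI[of _ "{}"]) (auto simp: vertex_cover_def)
      next
        case False
        then obtain e where "e \<in> F" by blast
        then obtain P where P: "closed_walk F P" "distinct P" "odd (length P)"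
          "length P \<le> 2 * s + 1"
          using short_odd_cycle_if_every_vertex_avoidable[OF F _ avoidable] nu by blast
        have shortest: "\<forall>ws. closed_walk F ws \<and> odd (length ws) \<longrightarrow> 2 * s + 1 \<le> length ws"
          using girth by auto
        then have "length P = 2 * s + 1" using P by fastforce
        then show ?thesis
          using vertex_cover_of_shortest_odd_cycle[OF F nu P(1,2) _ shortest] by auto
      qed
    qed
  qed
qed

section \<open>Blowing up vertices\<close>

text \<open>For the exponent vector \<open>a\<close> of a monomial \<open>x\<^sup>a\<close>, vertex \<open>v\<close> gets the \<open>a v\<close> copies
  \<open>(v, i)\<close>, \<open>i < a v\<close>; matchings with \<open>s\<close> edges then correspond to products of \<open>s\<close> edge monomials
  dividing \<open>x\<^sup>a\<close>.\<close>

definition blowup :: "'v set set \<Rightarrow> ('v \<Rightarrow> nat) \<Rightarrow> ('v \<times> nat) set set" where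
  "blowup E a = {{(u, i), (v, j)} | u v i j. {u, v} \<in> E \<and> i < a u \<and> j < a v}"

lemma finite_graph_blowup:
  fixes E :: "('v::finite) set set"
  assumes "simple_graph E"
  shows "finite_graph (blowup E a)"
proof -
  define S where "S = Sigma (UNIV :: 'v set) (\<lambda>v. {..<a v})"
  have "blowup E a \<subseteq> (\<lambda>(x, y). {x, y}) ` (S \<times> S)"
  proof
    fix e assume "e \<in> blowup E a"
    then obtain u v i j where uv: "e = {(u, i), (v, j)}" "i < a u" "j < a v"
      unfolding blowup_def by blast
    then have "((u, i), (v, j)) \<in> S \<times> S" "e = (\<lambda>(x, y). {x, y}) ((u, i), (v, j))"
      unfolding S_def by auto
    then show "e \<in> (\<lambda>(x, y). {x, y}) ` (S \<times> S)" by (rule rev_image_eqI)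
  qed
  moreover have "finite S" unfolding S_def by auto
  ultimately have "finite (blowup E a)" using finite_subset by blast
  moreover have "card e = 2" if e: "e \<in> blowup E a" for e
  proof -
    obtain u v i j where uv: "e = {(u, i), (v, j)}" "{u, v} \<in> E"
      using e unfolding blowup_def by blast
    have "u \<noteq> v" using assms uv(2) unfolding simple_graph_def by fastforce
    then show ?thesis using uv(1) by simp
  qed
  ultimately show ?thesis by (simp add: finite_graph_def)
qed

lemma closed_walk_blowup:
  assumes "closed_walk (blowup E a) ws"
  shows "closed_walk E (map fst ws)"
proof -
  have "{fst x, fst y} \<in> E" if xy: "{x, y} \<in> blowup E a" for x y
  proof -
    obtain u v i j where uv: "{x, y} = {(u, i), (v, j)}" "{u, v} \<in> E"
      using xy unfolding blowup_def by blast
    then have "{fst x, fst y} = {u, v}" by (auto simp: doubleton_eq_iff)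
    then show ?thesis using uv(2) by simp
  qed
  then show ?thesis using assms unfolding closed_walk_def by auto
qed

lemma vertex_cover_of_blowup_cover:
  fixes E :: "('v::finite) set set"
  assumes "finite D" "vertex_cover (blowup E a) D" "simple_graph E"
  shows "\<exists>C. vertex_cover E C \<and> (\<Sum>v\<in>C. a v) \<le> card D"
proof -
  define C where "C = {v. \<forall>i<a v. (v, i) \<in> D}"
  have "vertex_cover E C" unfolding vertex_cover_def
  proof
    fix e assume e: "e \<in> E"
    show "e \<inter> C \<noteq> {}"
    proof
      assume none: "e \<inter> C = {}"
      have "card e = 2" using e assms(3) unfolding simple_graph_def by blast
      then obtain u v where uv: "e = {u, v}" by (meson card_2_iff)
      then have "u \<notin> C" "v \<notin> C" using none by auto
      then obtain i j where ij: "i < a u" "(u, i) \<notin> D" "j < a v" "(v, j) \<notin> D"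
        unfolding C_def by auto
      have "{(u, i), (v, j)} \<in> blowup E a" unfolding blowup_def
        using ij(1,3) e uv by blast
      then have "{(u, i), (v, j)} \<inter> D \<noteq> {}" using assms(2) unfolding vertex_cover_def by blast
      then show False using ij(2,4) by blast
    qed
  qed
  moreover have "(\<Sum>v\<in>C. a v) = card (Sigma C (\<lambda>v. {..<a v}))" by (simp add: card_SigmaI)
  moreover have "Sigma C (\<lambda>v. {..<a v}) \<subseteq> D" unfolding C_def by auto
  then have "card (Sigma C (\<lambda>v. {..<a v})) \<le> card D" using assms(1) by (rule card_mono[rotated])
  ultimately show ?thesis by auto
qed

lemma minimal_vertex_cover_subset:
  fixes C :: "('v::finite) set"
  shows "vertex_cover E C \<Longrightarrow> \<exists>C0 \<subseteq> C. minimal_vertex_cover E C0"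
proof (induction "card C" arbitrary: C rule: less_induct)
  case less
  show ?case
  proof (cases "minimal_vertex_cover E C")
    case False
    then obtain D where D: "D \<subset> C" "vertex_cover E D"
      using less.prems unfolding minimal_vertex_cover_def by blast
    then have "card D < card C" by (intro psubset_card_mono) auto
    from less.hyps[OF this D(2)] D(1) show ?thesis by blast
  qed blast
qed

text \<open>The blown-up graph inherits the odd-girth bound. Without a matching of size \<open>s\<close> it has a
  vertex cover with at most \<open>s\<close> vertices, and the vertices all of whose copies lie in that cover
  form a vertex cover of \<open>E\<close> of weight at most \<open>s\<close>.\<close>

lemma matching_in_blowup:
  fixes E :: "('v::finite) set set"
  assumes E: "simple_graph E"
    and odd_girth: "\<forall>k. odd k \<and> int k \<le> 2 * int s - 3 \<longrightarrow> \<not> has_cycle_of_length E k"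
    and weight: "\<forall>C. minimal_vertex_cover E C \<longrightarrow> s + 1 \<le> (\<Sum>v\<in>C. a v)"
  shows "\<exists>M \<subseteq> blowup E a. matching M \<and> card M = s"
proof -
  have F: "finite_graph (blowup E a)" by (rule finite_graph_blowup[OF E])
  have girth: "\<forall>ws. closed_walk (blowup E a) ws \<and> odd (length ws) \<longrightarrow> 2 * s \<le> length ws + 1"
  proof (intro allI impI)
    fix ws assume ws: "closed_walk (blowup E a) ws \<and> odd (length ws)"
    then have "closed_walk E (map fst ws)" "odd (length (map fst ws))"
      using closed_walk_blowup by auto
    from odd_closed_walk_contains_odd_cycle[OF E this]
    obtain k where k: "k \<le> length ws" "odd k" "has_cycle_of_length E k" by auto
    then have "\<not> int k \<le> 2 * int s - 3" using odd_girth by blast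
    then show "2 * s \<le> length ws + 1" using k(1,2) by presburger
  qed
  show ?thesis
  proof (cases "matching_number (blowup E a) < s")
    case True
    obtain D where D: "finite D" "vertex_cover (blowup E a) D" "card D \<le> s"
      using small_vertex_cover_if_small_matching_number[OF F True girth] by blast
    obtain C where C: "vertex_cover E C" "(\<Sum>v\<in>C. a v) \<le> card D"
      using vertex_cover_of_blowup_cover[OF D(1,2) E] by blast
    obtain C0 where C0: "C0 \<subseteq> C" "minimal_vertex_cover E C0"
      using minimal_vertex_cover_subset[OF C(1)] by blast
    have "(\<Sum>v\<in>C0. a v) \<le> (\<Sum>v\<in>C. a v)" using C0(1) by (intro sum_mono2) auto
    then show ?thesis using weight C0(2) C(2) D(3) by fastforce
  next
    case False
    obtain M where M: "maximum_matching (blowup E a) M"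
      using maximum_matching_exists F by (auto simp: finite_graph_def)
    then obtain T where "T \<subseteq> M" "card T = s"
      using obtain_subset_with_card_n[of s M] False by (auto simp: maximum_matching_def)
    then show ?thesis using M by (auto simp: maximum_matching_def intro: matching_subset)
  qed
qed

definition edge_exponent :: "('v \<times> nat) set \<Rightarrow> 'v \<Rightarrow>\<^sub>0 nat" where
  "edge_exponent e = (\<Sum>x\<in>e. Poly_Mapping.single (fst x) 1)"

lemma edge_monomial_in_edge_ideal:
  assumes E: "simple_graph E" and e: "e \<in> blowup E a"
  shows "(Poly_Mapping.single (edge_exponent e) 1 :: ('v, 'k::comm_ring_1) mpoly) \<in> edge_ideal E"
proof -
  obtain u v i j where uv: "e = {(u, i), (v, j)}" "{u, v} \<in> E"
    using e unfolding blowup_def by blast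
  have "u \<noteq> v" using E uv(2) unfolding simple_graph_def by fastforce
  then have "edge_exponent e = Poly_Mapping.single u 1 + Poly_Mapping.single v 1"
    using uv(1) by (simp add: edge_exponent_def)
  then have "Poly_Mapping.single (edge_exponent e) (1::'k) = var u * var v"
    by (simp add: var_def mult_single)
  then show ?thesis
    using uv(2) unfolding edge_ideal_def by (blast intro: subsetD[OF generators_subset_ideal_gen])
qed

lemma matching_monomial_in_edge_ideal_pow:
  assumes E: "simple_graph E" and M: "M \<subseteq> blowup E a" "finite M"
  shows "(Poly_Mapping.single (\<Sum>e\<in>M. edge_exponent e) 1 :: ('v, 'k::comm_ring_1) mpoly)
    \<in> ideal_pow (edge_ideal E) (card M)"
proof -
  obtain xs where xs: "set xs = M" "distinct xs" using finite_distinct_list[OF M(2)] by blast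
  let ?g = "\<lambda>e. Poly_Mapping.single (edge_exponent e) (1::'k) :: ('v, 'k) mpoly"
  have "Poly_Mapping.single (\<Sum>e\<in>M. edge_exponent e) 1 = (\<Prod>e\<in>M. ?g e)"
    by (simp add: prod_single_one)
  also have "\<dots> = prod_list (map ?g xs)"
    using prod.distinct_set_conv_list[OF xs(2), of ?g] xs(1) by simp
  also have "\<dots> \<in> ideal_pow (edge_ideal E) (card M)"
    using edge_monomial_in_edge_ideal[OF E] M(1) xs distinct_card[OF xs(2)]
    by (intro prod_list_in_ideal_pow) auto
  finally show ?thesis .
qed

text \<open>Distinct edges of a matching use distinct copies \<open>(w, i)\<close>, and there are only \<open>a w\<close> of them.\<close>

lemma lookup_matching_exponent_le:
  assumes M: "M \<subseteq> blowup E a" "matching M" "finite M"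
  shows "Poly_Mapping.lookup (\<Sum>e\<in>M. edge_exponent e) w \<le> a w"
proof -
  have fin: "finite e" if "e \<in> M" for e
    using that M(1) unfolding blowup_def by auto
  have "Poly_Mapping.lookup (edge_exponent e) w = card {x\<in>e. fst x = w}" if "e \<in> M" for e
  proof -
    have "Poly_Mapping.lookup (edge_exponent e) w = (\<Sum>x\<in>e. (1::nat) when fst x = w)"
      unfolding edge_exponent_def lookup_sum lookup_single by simp
    also have "\<dots> = card {x\<in>e. fst x = w}"
      using fin[OF that] by (simp add: when_def sum.inter_filter[symmetric])
    finally show ?thesis .
  qed
  then have "Poly_Mapping.lookup (\<Sum>e\<in>M. edge_exponent e) w = (\<Sum>e\<in>M. card {x\<in>e. fst x = w})"
    by (simp add: lookup_sum)
  also have "\<dots> = card (\<Union>e\<in>M. {x\<in>e. fst x = w})"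
    using M(2,3) fin unfolding matching_def by (intro card_UN_disjoint[symmetric]) auto
  also have "\<dots> \<le> card ({w} \<times> {..<a w})"
    using M(1) unfolding blowup_def by (intro card_mono) auto
  also have "\<dots> = a w" by simp
  finally show ?thesis .
qed

lemma monomial_in_edge_ideal_pow:
  fixes E :: "('v::finite) set set" and m :: "'v \<Rightarrow>\<^sub>0 nat"
  assumes E: "simple_graph E"
    and odd_girth: "\<forall>k. odd k \<and> int k \<le> 2 * int s - 3 \<longrightarrow> \<not> has_cycle_of_length E k"
    and degree: "\<And>C. minimal_vertex_cover E C \<Longrightarrow> s + 1 \<le> degree_on C m"
  shows "(Poly_Mapping.single m 1 :: ('v, 'k::comm_ring_1) mpoly) \<in> ideal_pow (edge_ideal E) s"
proof -
  let ?a = "Poly_Mapping.lookup m"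
  have "\<forall>C. minimal_vertex_cover E C \<longrightarrow> s + 1 \<le> (\<Sum>v\<in>C. ?a v)"
    using degree by (simp add: degree_on_def)
  then obtain M where M: "M \<subseteq> blowup E ?a" "matching M" "card M = s"
    using matching_in_blowup[OF E odd_girth] by blast
  have "finite (blowup E ?a)" using finite_graph_blowup[OF E] by (simp add: finite_graph_def)
  with M(1) have fin: "finite M" by (rule finite_subset)
  have "Poly_Mapping.single (\<Sum>e\<in>M. edge_exponent e) 1 \<in> ideal_pow (edge_ideal E) s"
    using matching_monomial_in_edge_ideal_pow[OF E M(1) fin] M(3) by simp
  then show ?thesis
    by (rule monomial_in_ideal_if_divisible[OF is_ideal_ideal_pow])
      (rule lookup_matching_exponent_le[OF M(1,2) fin])
qed

theorem proposition3p7: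
  fixes E :: "('v::finite) set set" and s :: nat
  assumes "simple_graph E"
    and "s \<ge> 1"
    and "\<forall>k. odd k \<and> int k \<le> 2 * int s - 3 \<longrightarrow> \<not> has_cycle_of_length E k"
  shows "(symbolic_power E (s + 1) :: ('v, 'k::field) mpoly set) \<subseteq> ideal_pow (edge_ideal E) s"
proof
  fix p :: "('v, 'k) mpoly"
  assume p: "p \<in> symbolic_power E (s + 1)"
  show "p \<in> ideal_pow (edge_ideal E) s"
  proof (rule in_ideal_if_monomials_in[OF is_ideal_ideal_pow])
    fix m assume "m \<in> Poly_Mapping.keys p"
    then have "\<And>C. minimal_vertex_cover E C \<Longrightarrow> s + 1 \<le> degree_on C m"
      using degree_on_cover_if_in_symbolic_power[OF p] by blast
    then show "Poly_Mapping.single m 1 \<in> ideal_pow (edge_ideal E) s"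
      by (rule monomial_in_edge_ideal_pow[OF assms(1,3)])
  qed
qed

end
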